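(* Consider the symmetric Markov process described in the context, satisfying Assumption (A) and the ergodicity condition (E$_s$). For each $x=(x_1,\dots,x_c)\in\{-1,1\}^c$, with $\eta_c:=-\frac1c\sum_{i=1}^c x_i$, the equation \[\eta_c^2\bigl(F(\beta_0)^2+4A(\beta_0)D(\beta_0)\bigr)=\bigl(B(\beta_0)+C(\beta_0)-\beta_0^K(A(1)+B(1)+C(1)+D(1))\bigr)^2\] has $2K$ solutions $\beta_0$ (counted with multiplicity) inside the unit circle $|\beta_0|<1$.
   Context: Fix integers $c\ge1$, $K\ge1$. Consider an irreducible continuous-time Markov process on $V\cup W$, where $V$ is finite and $W=\{\mathbf n=(n_0,\dots,n_c): n_0\in\{0,1,\dots\},\ n_i\in\{0,1\}\}$. It is symmetric: there are nonnegative rates $a_k,b_k,c_k,d_k$ ($k\le K$ integer), the same for every $i$. From $\mathbf n\in W$, for each $i\in\{1,\dots,c\}$ and $k\in\{-n_0,\dots,K\}$, the process jumps (changing only coordinates $0$ and $i$) from $(n_0,n_i)=(n_0,0)$ to $(n_0+k,1)$ at rate $a_k$ and to $(n_0+k,0)$ at rate $b_k$, and from $(n_0,1)$ to $(n_0+k,1)$ at rate $c_k$ and to $(n_0+k,0)$ at rate $d_k$; from $\mathbf n$ it jumps into $V$ with total rate $\sum_i\sum_{k\le-n_0-1}((1-n_i)(a_k+b_k)+n_i(c_k+d_k))$; no other transitions leave $W$, and from $V$ no transitions go to states with $n_0\ge K$. Let $A(z)=\sum_{k=-\infty}^K a_kz^{K-k}$, $B(z)=\sum_{k=-\infty}^K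 b_kz^{K-k}$, $C(z)=\sum_{k=-\infty}^K c_kz^{K-k}$, $D(z)=\sum_{k=-\infty}^K d_kz^{K-k}$ (power series in $z$), and $F(z)=z^K(A(1)+B(1)-C(1)-D(1))-B(z)+C(z)$. Assumption (A): (i) $A(1),B(1),C(1),D(1)<\infty$; (ii) $A(1),D(1)>0$; (iii) $A'(1),B'(1),C'(1),D'(1)<\infty$; (iv) $a_K=0$ or $d_K=0$; (v) $b_K=c_K\ne0$. Ergodicity condition (E$_s$): $0<D(1)(A'(1)-KA(1)+B'(1)-KB(1))+A(1)(C'(1)-KC(1)+D'(1)-KD(1))$. *)

theory Defs
  imports "HOL-Complex_Analysis.Complex_Analysis"
begin

text \<open>Rates are functions on the integers; only the values at k <= K are used.
  The generating function of a rate sequence r is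
  R(z) = sum_{k <= K} r_k z^(K-k) = sum_{n >= 0} r_(K-n) z^n.\<close>

definition gen_fun :: "nat \<Rightarrow> (int \<Rightarrow> real) \<Rightarrow> complex \<Rightarrow> complex" where
  "gen_fun K r z = (\<Sum>n. complex_of_real (r (int K - int n)) * z ^ n)"

definition gen_at1 :: "nat \<Rightarrow> (int \<Rightarrow> real) \<Rightarrow> real" where
  "gen_at1 K r = (\<Sum>n. r (int K - int n))"

definition gen_deriv_at1 :: "nat \<Rightarrow> (int \<Rightarrow> real) \<Rightarrow> real" where
  "gen_deriv_at1 K r = (\<Sum>n. real n * r (int K - int n))"

text \<open>States of W: (n0, ns) where ns i encodes n_i (True = 1) for i in {1..c},
  and ns i = False outside {1..c} (canonical representation).\<close>
type_synonym wstate = "nat \<times> (nat \<Rightarrow> bool)"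

definition Wset :: "nat \<Rightarrow> wstate set" where
  "Wset c = {(n0, ns). \<forall>i. ns i \<longrightarrow> 1 \<le> i \<and> i \<le> c}"

text \<open>Rate of a jump of size k of coordinate 0, with coordinate i going from u to v:
  (0 -> 1): a_k, (0 -> 0): b_k, (1 -> 1): c_k, (1 -> 0): d_k.\<close>
definition jump_rate ::
  "(int \<Rightarrow> real) \<Rightarrow> (int \<Rightarrow> real) \<Rightarrow> (int \<Rightarrow> real) \<Rightarrow> (int \<Rightarrow> real) \<Rightarrow> bool \<Rightarrow> bool \<Rightarrow> int \<Rightarrow> real" where
  "jump_rate a b cr d u v k =
     (if \<not> u \<and> v then a k else if \<not> u \<and> \<not> v then b k else if u \<and> v then cr k else d k)"

text \<open>Transition rate within W (total over all i producing the same target).\<close>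
definition qWW ::
  "nat \<Rightarrow> nat \<Rightarrow> (int \<Rightarrow> real) \<Rightarrow> (int \<Rightarrow> real) \<Rightarrow> (int \<Rightarrow> real) \<Rightarrow> (int \<Rightarrow> real)
   \<Rightarrow> wstate \<Rightarrow> wstate \<Rightarrow> real" where
  "qWW c K a b cr d w w' =
     (\<Sum>i\<in>{1..c}.
        if (\<forall>j. j \<noteq> i \<longrightarrow> snd w' j = snd w j) \<and> int (fst w') - int (fst w) \<le> int K
        then jump_rate a b cr d (snd w i) (snd w' i) (int (fst w') - int (fst w)) else 0)"

definition exit_rate ::
  "nat \<Rightarrow> (int \<Rightarrow> real) \<Rightarrow> (int \<Rightarrow> real) \<Rightarrow> (int \<Rightarrow> real) \<Rightarrow> (int \<Rightarrow> real) \<Rightarrow> wstate \<Rightarrow> real" where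
  "exit_rate c a b cr d w =
     (\<Sum>i\<in>{1..c}. \<Sum>m. (let k = - int (fst w) - 1 - int m in
        if snd w i then cr k + d k else a k + b k))"

definition pos_rel ::
  "nat \<Rightarrow> nat \<Rightarrow> (int \<Rightarrow> real) \<Rightarrow> (int \<Rightarrow> real) \<Rightarrow> (int \<Rightarrow> real) \<Rightarrow> (int \<Rightarrow> real)
   \<Rightarrow> 'v set \<Rightarrow> ('v \<Rightarrow> 'v \<Rightarrow> real) \<Rightarrow> ('v \<Rightarrow> wstate \<Rightarrow> real) \<Rightarrow> (wstate \<Rightarrow> 'v \<Rightarrow> real)
   \<Rightarrow> ('v + wstate) rel" where
  "pos_rel c K a b cr d V qVV qVW qWV =
     {(Inl v, Inl v') | v v'. v \<in> V \<and> v' \<in> V \<and> qVV v v' > 0}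
   \<union> {(Inl v, Inr w) | v w. v \<in> V \<and> w \<in> Wset c \<and> qVW v w > 0}
   \<union> {(Inr w, Inr w') | w w'. w \<in> Wset c \<and> w' \<in> Wset c \<and> qWW c K a b cr d w w' > 0}
   \<union> {(Inr w, Inl v) | w v. w \<in> Wset c \<and> v \<in> V \<and> qWV w v > 0}"

definition sym_process ::
  "nat \<Rightarrow> nat \<Rightarrow> (int \<Rightarrow> real) \<Rightarrow> (int \<Rightarrow> real) \<Rightarrow> (int \<Rightarrow> real) \<Rightarrow> (int \<Rightarrow> real)
   \<Rightarrow> 'v set \<Rightarrow> ('v \<Rightarrow> 'v \<Rightarrow> real) \<Rightarrow> ('v \<Rightarrow> wstate \<Rightarrow> real) \<Rightarrow> (wstate \<Rightarrow> 'v \<Rightarrow> real) \<Rightarrow> bool" where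
  "sym_process c K a b cr d V qVV qVW qWV \<longleftrightarrow>
     finite V \<and>
     (\<forall>k \<le> int K. a k \<ge> 0 \<and> b k \<ge> 0 \<and> cr k \<ge> 0 \<and> d k \<ge> 0) \<and>
     (\<forall>v v'. qVV v v' \<ge> 0) \<and> (\<forall>v w. qVW v w \<ge> 0) \<and> (\<forall>w v. qWV w v \<ge> 0) \<and>
     (\<forall>w \<in> Wset c. (\<Sum>v\<in>V. qWV w v) = exit_rate c a b cr d w) \<and>
     (\<forall>v \<in> V. \<forall>w. fst w \<ge> K \<longrightarrow> qVW v w = 0) \<and>
     (\<forall>s \<in> Inl ` V \<union> Inr ` Wset c. \<forall>t \<in> Inl ` V \<union> Inr ` Wset c.
        (s, t) \<in> (pos_rel c K a b cr d V qVV qVW qWV)\<^sup>*)"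

end

theory Submission
  imports Defs
begin

text \<open>With s = (1 + \<eta>)/2, t = (1 - \<eta>)/2, P = A(1) + B(1) and Q = C(1) + D(1), G
  is -4 (L1 L2 - \<eta>^2 A D), where L1(z) = z^K (t P + s Q) - (t B(z) + s C(z)) and L2 is L1 with s and
  t exchanged. The coefficients are nonnegative, so on |z| = \<rho> every series is dominated by its
  value at \<rho>; the ergodicity condition gives A(\<rho>) D(\<rho>) < u v with
  u = \<rho>^K P - B(\<rho>) > 0 and v = \<rho>^K Q - C(\<rho>) > 0 for all \<rho> close to 1. On such a circle,
  Rouche's theorem replaces G successively by L1 L2, by z^K (t P + s Q) L2 and by a
  multiple of z^(2K), which has 2K zeros; the same estimate excludes zeros with \<rho> \<le> |z| < 1.\<close>

definition zero_count :: "(complex \<Rightarrow> complex) \<Rightarrow> complex set \<Rightarrow> int" where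
  "zero_count f S = (\<Sum>p\<in>{p\<in>S. f p = 0}. zorder f p)"

lemma finite_zeros_in_ball:
  fixes f :: "complex \<Rightarrow> complex"
  assumes hf: "f holomorphic_on ball 0 1" and r: "r < 1" and z0: "f z0 \<noteq> 0" "norm z0 < 1"
  shows "finite {p\<in>ball 0 r. f p = 0}"
proof (cases "f constant_on ball 0 1")
  case True
  with z0 have "{p\<in>ball 0 r. f p = 0} = {}"
    using r by (auto simp: constant_on_def)
  then show ?thesis by (metis finite.emptyI)
next
  case False
  have "finite {z\<in>cball 0 r. f z = 0}"
    by (rule holomorphic_compact_finite_zeros[OF hf _ _ _ _ False]) (use r in auto)
  then show ?thesis by (rule rev_finite_subset) auto
qed

lemma winding_sum_circlepath_eq_zero_count:
  fixes h :: "complex \<Rightarrow> complex"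
  assumes r: "0 < r" "r < r'"
    and fin: "finite {p\<in>ball 0 r'. h p = 0}"
    and nz: "\<And>z. norm z = r \<Longrightarrow> h z \<noteq> 0"
  shows "(\<Sum>p\<in>{p\<in>ball 0 r'. h p = 0}. winding_number (circlepath 0 r) p * zorder h p)
       = zero_count h (ball 0 r)"
proof -
  have outside: "winding_number (circlepath 0 r) p = 0" if "h p = 0" "\<not> norm p < r" for p
  proof -
    have "p \<notin> cball 0 r" using nz[of p] that by force
    then show ?thesis
      by (intro winding_number_zero_outside[of _ "cball 0 r"]) (use r in auto)
  qed
  have "(\<Sum>p\<in>{p\<in>ball 0 r'. h p = 0}. winding_number (circlepath 0 r) p * zorder h p)
      = (\<Sum>p\<in>{p\<in>ball 0 r. h p = 0}. winding_number (circlepath 0 r) p * zorder h p)"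
    by (rule sum.mono_neutral_right[OF fin]) (use r outside in auto)
  also have "\<dots> = (\<Sum>p\<in>{p\<in>ball 0 r. h p = 0}. of_int (zorder h p))"
    by (intro sum.cong refl) (auto simp: winding_number_circlepath)
  finally show ?thesis by (simp add: zero_count_def)
qed

lemma Rouche_zero_count:
  fixes f h :: "complex \<Rightarrow> complex"
  assumes hf: "f holomorphic_on ball 0 1" and hh: "h holomorphic_on ball 0 1"
    and r: "0 < r" "r < 1"
    and less: "\<And>z. norm z = r \<Longrightarrow> norm (h z - f z) < norm (f z)"
  shows "zero_count h (ball 0 r) = zero_count f (ball 0 r)"
proof -
  define g where "g z = h z - f z" for z
  define r' where "r' = (1 + r) / 2"
  have r': "r < r'" "r' < 1" using r by (auto simp: r'_def)
  have h_fg: "f p + g p = h p" for p by (simp add: g_def)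
  have nz: "f z \<noteq> 0" "h z \<noteq> 0" if "norm z = r" for z
    using less[OF that] by auto
  have z0: "norm (complex_of_real r) = r" "norm (complex_of_real r) < 1" using r by auto
  have fin_h: "finite {p\<in>ball 0 r'. h p = 0}"
    by (rule finite_zeros_in_ball[OF hh r'(2) nz(2)[OF z0(1)] z0(2)])
  have fin_f: "finite {p\<in>ball 0 r'. f p = 0}"
    by (rule finite_zeros_in_ball[OF hf r'(2) nz(1)[OF z0(1)] z0(2)])
  have "ball 0 r' \<subseteq> ball (0::complex) 1" using r' by auto
  then have hol: "f holomorphic_on ball 0 r'" "g holomorphic_on ball 0 r'"
    using hf hh unfolding g_def by (auto intro!: holomorphic_intros intro: holomorphic_on_subset)
  have "(\<Sum>p\<in>{p\<in>ball 0 r'. f p + g p = 0}.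
          winding_number (circlepath 0 r) p * zorder (\<lambda>p. f p + g p) p)
      = (\<Sum>p\<in>{p\<in>ball 0 r'. f p = 0}. winding_number (circlepath 0 r) p * zorder f p)"
  proof (rule Rouche_theorem)
    show "\<forall>z. z \<notin> ball 0 r' \<longrightarrow> winding_number (circlepath 0 r) z = 0"
      using r r' by (auto intro!: winding_number_zero_outside[of _ "cball 0 r"])
  qed (use r r' fin_h fin_f hol less in \<open>auto simp: path_image_circlepath h_fg g_def[symmetric]\<close>)
  then show ?thesis unfolding h_fg
    using winding_sum_circlepath_eq_zero_count[OF r(1) r'(1)] fin_h fin_f nz by simp
qed

lemma zero_count_monomial:
  fixes c :: complex
  assumes c: "c \<noteq> 0" and r: "0 < r"
  shows "zero_count (\<lambda>z. c * z ^ n) (ball 0 r) = int n"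
proof (cases "n = 0")
  case True
  with c show ?thesis by (simp add: zero_count_def)
next
  case False
  then have "{p\<in>ball 0 r. c * p ^ n = 0} = {0}" using c r by auto
  moreover have "zorder (\<lambda>z. c * z ^ n) 0 = int n"
    by (rule zorder_eqI[of UNIV 0 "\<lambda>_. c"]) (use c in \<open>auto simp: power_int_def\<close>)
  ultimately show ?thesis by (simp add: zero_count_def)
qed

lemma zero_count_Rouche_chain:
  fixes H L1 L2 :: "complex \<Rightarrow> complex" and c1 c2 :: complex
  assumes hol: "L1 holomorphic_on ball 0 1" "L2 holomorphic_on ball 0 1" "H holomorphic_on ball 0 1"
    and \<rho>: "0 < \<rho>" "\<rho> < 1"
    and est: "\<And>z. norm z = \<rho> \<Longrightarrow> norm (H z - L1 z * L2 z) < norm (L1 z * L2 z)"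
      "\<And>z. norm z = \<rho> \<Longrightarrow> norm (L1 z * L2 z - z ^ K * c1 * L2 z) < norm (z ^ K * c1 * L2 z)"
      "\<And>z. norm z = \<rho> \<Longrightarrow>
         norm (z ^ K * c1 * L2 z - z ^ K * c1 * (z ^ K * c2)) < norm (z ^ K * c1 * (z ^ K * c2))"
  shows "zero_count H (ball 0 \<rho>) = int (2 * K)"
proof -
  have "zero_count H (ball 0 \<rho>) = zero_count (\<lambda>z. L1 z * L2 z) (ball 0 \<rho>)"
    by (rule Rouche_zero_count) (use est \<rho> hol in \<open>auto intro!: holomorphic_intros\<close>)
  also have "\<dots> = zero_count (\<lambda>z. z ^ K * c1 * L2 z) (ball 0 \<rho>)"
    by (rule Rouche_zero_count) (use est \<rho> hol in \<open>auto intro!: holomorphic_intros\<close>)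
  also have "\<dots> = zero_count (\<lambda>z. z ^ K * c1 * (z ^ K * c2)) (ball 0 \<rho>)"
    by (rule Rouche_zero_count) (use est \<rho> hol in \<open>auto intro!: holomorphic_intros\<close>)
  also have "(\<lambda>z. z ^ K * c1 * (z ^ K * c2)) = (\<lambda>z. (c1 * c2) * z ^ (2 * K))"
    unfolding mult_2 power_add by (simp add: fun_eq_iff algebra_simps)
  also have "zero_count \<dots> (ball 0 \<rho>) = int (2 * K)"
  proof (rule zero_count_monomial[OF _ \<rho>(1)])
    have "norm (complex_of_real \<rho>) = \<rho>" using \<rho> by simp
    from le_less_trans[OF norm_ge_zero est(3)[OF this]] show "c1 * c2 \<noteq> 0" by auto
  qed
  finally show ?thesis .
qed

lemma zeros_in_unit_disc_eq_zero_count: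
  fixes h :: "complex \<Rightarrow> complex"
  assumes hh: "h holomorphic_on ball 0 1" and \<rho>: "0 < \<rho>" "\<rho> < 1"
    and nz: "\<And>z. \<rho> \<le> norm z \<Longrightarrow> norm z < 1 \<Longrightarrow> h z \<noteq> 0"
  shows "finite {z. norm z < 1 \<and> h z = 0}"
    and "(\<Sum>z\<in>{z. norm z < 1 \<and> h z = 0}. nat (zorder h z)) = nat (zero_count h (ball 0 \<rho>))"
proof -
  have zeros: "{z. norm z < 1 \<and> h z = 0} = {p\<in>ball 0 \<rho>. h p = 0}"
    using nz \<rho> by (force simp: not_less)
  have h\<rho>: "h (complex_of_real \<rho>) \<noteq> 0" "norm (complex_of_real \<rho>) < 1"
    using nz[of "complex_of_real \<rho>"] \<rho> by auto
  show fin: "finite {z. norm z < 1 \<and> h z = 0}"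
    unfolding zeros by (rule finite_zeros_in_ball[OF hh \<rho>(2) h\<rho>])
  have nonconst: "\<exists>w\<in>ball 0 1. h w \<noteq> 0"
    using h\<rho> by (intro bexI[of _ "complex_of_real \<rho>"]) auto
  have "0 \<le> zorder h p" if "p \<in> ball 0 1" "h p = 0" for p
    using zorder_exist_zero[OF hh _ _ that(1) nonconst] that by auto
  then have "int (\<Sum>z\<in>{p\<in>ball 0 \<rho>. h p = 0}. nat (zorder h z)) = zero_count h (ball 0 \<rho>)"
    using \<rho> by (simp add: zero_count_def of_nat_sum)
  then show "(\<Sum>z\<in>{z. norm z < 1 \<and> h z = 0}. nat (zorder h z)) = nat (zero_count h (ball 0 \<rho>))"
    unfolding zeros by linarith
qed

definition cpowser :: "(nat \<Rightarrow> real) \<Rightarrow> complex \<Rightarrow> complex" where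
  "cpowser co z = (\<Sum>n. complex_of_real (co n) * z ^ n)"

definition rpowser :: "(nat \<Rightarrow> real) \<Rightarrow> real \<Rightarrow> real" where
  "rpowser co t = (\<Sum>n. co n * t ^ n)"

text \<open>The difference quotient (R(1) - R(t)) / (1 - t) of R = rpowser co, written without
  division so that it makes sense at t = 1 as well.\<close>
definition powser_slope :: "(nat \<Rightarrow> real) \<Rightarrow> real \<Rightarrow> real" where
  "powser_slope co t = (\<Sum>n. co n * (\<Sum>j<n. t ^ j))"

definition moment_summable :: "(nat \<Rightarrow> real) \<Rightarrow> bool" where
  "moment_summable co \<longleftrightarrow> (\<forall>n. 0 \<le> co n) \<and> summable co \<and> summable (\<lambda>n. real n * co n)"

lemma moment_summableD:
  assumes "moment_summable co"
  shows "0 \<le> co n" "summable co" "summable (\<lambda>n. real n * co n)" "0 \<le> suminf co"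
  using assms suminf_nonneg[of co] by (auto simp: moment_summable_def)

lemma holomorphic_on_cpowser:
  fixes co :: "nat \<Rightarrow> real"
  assumes "summable co"
  shows "cpowser co holomorphic_on ball 0 1"
proof -
  define F where "F = Abs_fps (\<lambda>n. complex_of_real (co n))"
  have "summable (\<lambda>n. fps_nth F n * 1 ^ n)" using assms by (simp add: F_def)
  then have "ereal (norm (1::complex)) \<le> fps_conv_radius F"
    unfolding fps_conv_radius_def by (rule conv_radius_geI)
  then have "ball 0 1 \<subseteq> eball 0 (fps_conv_radius F)" by (intro ball_eball_mono) simp
  moreover have "cpowser co = eval_fps F" by (auto simp: cpowser_def eval_fps_def F_def)
  ultimately show ?thesis by (metis holomorphic_on_eval_fps)
qed

lemma summable_rpowser:
  fixes co :: "nat \<Rightarrow> real"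
  assumes nn: "\<And>n. 0 \<le> co n" and "summable co" and t: "0 \<le> t" "t \<le> 1"
  shows "summable (\<lambda>n. co n * t ^ n)"
proof (rule summable_comparison_test'[OF \<open>summable co\<close>])
  show "norm (co n * t ^ n) \<le> co n" for n
    using nn[of n] t by (simp add: abs_mult mult_left_le power_le_one)
qed

lemma norm_cpowser_le:
  fixes co :: "nat \<Rightarrow> real"
  assumes nn: "\<And>n. 0 \<le> co n" and "summable co" and z: "norm z \<le> 1"
  shows "norm (cpowser co z) \<le> rpowser co (norm z)"
proof -
  have eq: "norm (complex_of_real (co n) * z ^ n) = co n * norm z ^ n" for n
    using nn[of n] by (simp add: norm_mult norm_power)
  have "summable (\<lambda>n. norm (complex_of_real (co n) * z ^ n))"
    unfolding eq by (rule summable_rpowser[OF nn \<open>summable co\<close>]) (use z in auto)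
  then show ?thesis unfolding cpowser_def rpowser_def eq[symmetric] by (rule summable_norm)
qed

lemma norm_slope_term_le:
  assumes "0 \<le> c" "0 \<le> t" "t \<le> 1"
  shows "norm (c * (\<Sum>j<n. t ^ j)) \<le> real n * c"
proof -
  have "0 \<le> (\<Sum>j<n. t ^ j)" using assms by (simp add: sum_nonneg)
  moreover have "(\<Sum>j<n. t ^ j) \<le> (\<Sum>j<n. 1)"
    by (intro sum_mono) (use assms in \<open>simp add: power_le_one\<close>)
  ultimately have "0 \<le> (\<Sum>j<n. t ^ j)" "(\<Sum>j<n. t ^ j) \<le> real n" by simp_all
  then show ?thesis using assms by (simp add: abs_mult mult.commute mult_left_mono)
qed

lemma rpowser_eq_slope:
  fixes co :: "nat \<Rightarrow> real"
  assumes m: "moment_summable co" and t: "0 \<le> t" "t \<le> 1"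
  shows "rpowser co t = suminf co - (1 - t) * powser_slope co t"
proof -
  note nn = moment_summableD(1)[OF m] and sm = moment_summableD(2)[OF m]
    and sm1 = moment_summableD(3)[OF m]
  have s1: "summable (\<lambda>n. co n * t ^ n)" by (rule summable_rpowser[OF nn sm t])
  have s2: "summable (\<lambda>n. co n * (\<Sum>j<n. t ^ j))"
    by (rule summable_comparison_test'[OF sm1 norm_slope_term_le[OF nn t]])
  have "co n - co n * t ^ n = (1 - t) * (co n * (\<Sum>j<n. t ^ j))" for n
  proof -
    have "co n - co n * t ^ n = co n * (1 - t ^ n)" by (simp add: algebra_simps)
    then show ?thesis by (simp only: one_diff_power_eq mult.left_commute)
  qed
  then have "suminf co - rpowser co t = (\<Sum>n. (1 - t) * (co n * (\<Sum>j<n. t ^ j)))"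
    unfolding rpowser_def suminf_diff[OF sm s1] by simp
  also have "\<dots> = (1 - t) * powser_slope co t"
    unfolding powser_slope_def by (rule suminf_mult[OF s2])
  finally show ?thesis by simp
qed

lemma powser_slope_tendsto:
  fixes co :: "nat \<Rightarrow> real"
  assumes m: "moment_summable co"
  shows "(powser_slope co \<longlongrightarrow> (\<Sum>n. real n * co n)) (at_left 1)"
proof -
  note nn = moment_summableD(1)[OF m] and sm1 = moment_summableD(3)[OF m]
  have "\<forall>\<^sub>F t in at_left (1::real). 0 < t \<and> t < 1"
    using eventually_at_left_real[of 0 "1::real"] by simp
  then have "\<forall>\<^sub>F (n, t) in (at_top :: nat filter) \<times>\<^sub>F at_left (1::real). 0 < t \<and> t < 1"
    by (subst eventually_prod2) simp_all
  then have bound: "\<forall>\<^sub>F (n, t) in at_top \<times>\<^sub>F at_left 1. norm (co n * (\<Sum>j<n. t ^ j)) \<le> real n * co n"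
    by (rule eventually_mono) (use norm_slope_term_le nn in auto)
  have lim: "((\<lambda>t. co n * (\<Sum>j<n. t ^ j)) \<longlongrightarrow> real n * co n) (at_left 1)" for n
  proof -
    have "((\<lambda>t::real. co n * (\<Sum>j<n. t ^ j)) \<longlongrightarrow> co n * (\<Sum>j<n. 1 ^ j)) (at_left 1)"
      by (intro tendsto_intros)
    then show ?thesis by (simp add: mult.commute)
  qed
  show ?thesis
    using tannerys_theorem[OF lim bound sm1] by (simp add: powser_slope_def[abs_def])
qed

text \<open>Writing x = 1 - t, each series is its value at 1 minus x times its slope, and
  t ^ K = 1 - x (1 + t + ... + t ^ (K - 1)). So the two linear factors tend to A(1) > 0 and
  D(1) > 0, while their product minus A(t) D(t) is x times a function tending to the
  right-hand side of the ergodicity condition.\<close>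
lemma eventually_boundary_inequalities:
  fixes al be ga de :: "nat \<Rightarrow> real" and K :: nat
  assumes m: "moment_summable al" "moment_summable be" "moment_summable ga" "moment_summable de"
    and pos: "0 < suminf al" "0 < suminf de"
    and E: "0 < suminf de * ((\<Sum>n. real n * al n) - real K * suminf al
                               + (\<Sum>n. real n * be n) - real K * suminf be)
             + suminf al * ((\<Sum>n. real n * ga n) - real K * suminf ga
                               + (\<Sum>n. real n * de n) - real K * suminf de)"
  shows "\<forall>\<^sub>F t in at_left 1. 0 < t \<and>
           0 < t ^ K * (suminf al + suminf be) - rpowser be t \<and>
           0 < t ^ K * (suminf ga + suminf de) - rpowser ga t \<and>
           rpowser al t * rpowser de t
             < (t ^ K * (suminf al + suminf be) - rpowser be t)
               * (t ^ K * (suminf ga + suminf de) - rpowser ga t)"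
proof -
  define q where "q t = (\<Sum>j<K. t ^ j)" for t :: real
  define U where "U t = q t * (suminf al + suminf be) - powser_slope be t" for t
  define W where "W t = q t * (suminf ga + suminf de) - powser_slope ga t" for t
  define rest where "rest t = suminf al * powser_slope de t + suminf de * powser_slope al t
      - suminf al * W t - suminf de * U t
      + (1 - t) * (U t * W t - powser_slope al t * powser_slope de t)" for t
  have lim_U: "(U \<longlongrightarrow> real K * (suminf al + suminf be) - (\<Sum>n. real n * be n)) (at_left 1)"
    unfolding U_def q_def by (auto intro!: tendsto_eq_intros powser_slope_tendsto m)
  have lim_W: "(W \<longlongrightarrow> real K * (suminf ga + suminf de) - (\<Sum>n. real n * ga n)) (at_left 1)"
    unfolding W_def q_def by (auto intro!: tendsto_eq_intros powser_slope_tendsto m)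
  have lim_u: "((\<lambda>t. suminf al - (1 - t) * U t) \<longlongrightarrow> suminf al) (at_left 1)"
    by (auto intro!: tendsto_eq_intros lim_U)
  have lim_v: "((\<lambda>t. suminf de - (1 - t) * W t) \<longlongrightarrow> suminf de) (at_left 1)"
    by (auto intro!: tendsto_eq_intros lim_W)
  have lim_rest: "(rest \<longlongrightarrow> suminf de * ((\<Sum>n. real n * al n) - real K * suminf al
                               + (\<Sum>n. real n * be n) - real K * suminf be)
             + suminf al * ((\<Sum>n. real n * ga n) - real K * suminf ga
                               + (\<Sum>n. real n * de n) - real K * suminf de)) (at_left 1)"
    unfolding rest_def
    by (auto intro!: tendsto_eq_intros lim_U lim_W powser_slope_tendsto m simp: algebra_simps)
  have "\<forall>\<^sub>F t in at_left 1. 0 < suminf al - (1 - t) * U t \<and>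
      0 < suminf de - (1 - t) * W t \<and> 0 < rest t \<and> 0 < t \<and> t < 1"
    using order_tendstoD(1)[OF lim_u pos(1)] order_tendstoD(1)[OF lim_v pos(2)]
      order_tendstoD(1)[OF lim_rest E] eventually_at_left_real[of 0 "1::real", simplified]
    by eventually_elim simp
  then show ?thesis
  proof eventually_elim
    case (elim t)
    then have t: "0 \<le> t" "t \<le> 1" by auto
    note slope = rpowser_eq_slope[OF _ t]
    have tK: "t ^ K = 1 - (1 - t) * q t"
      unfolding q_def using one_diff_power_eq[of t K] by simp
    have u: "t ^ K * (suminf al + suminf be) - rpowser be t = suminf al - (1 - t) * U t"
      unfolding U_def tK slope[OF m(2)] by (simp add: algebra_simps)
    have v: "t ^ K * (suminf ga + suminf de) - rpowser ga t = suminf de - (1 - t) * W t"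
      unfolding W_def tK slope[OF m(3)] by (simp add: algebra_simps)
    have "(suminf al - (1 - t) * U t) * (suminf de - (1 - t) * W t) - rpowser al t * rpowser de t
        = (1 - t) * rest t"
      unfolding rest_def slope[OF m(1)] slope[OF m(4)] by (simp add: algebra_simps)
    moreover have "0 < (1 - t) * rest t" using elim by simp
    ultimately have "rpowser al t * rpowser de t
        < (suminf al - (1 - t) * U t) * (suminf de - (1 - t) * W t)" by linarith
    then show ?case using elim u v by simp
  qed
qed

lemma zero_count_cmult:
  assumes "c \<noteq> 0"
  shows "zero_count (\<lambda>z. c * f z) S = zero_count f S"
  using assms by (simp add: zero_count_def zorder_cmult)

lemma norm_convex_comb_le:
  fixes Bz Cz :: complex
  assumes "0 \<le> \<sigma>" "0 \<le> \<tau>" "norm Bz \<le> Br" "norm Cz \<le> Cr"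
  shows "norm (of_real \<sigma> * Bz + of_real \<tau> * Cz) \<le> \<sigma> * Br + \<tau> * Cr"
proof -
  have "norm (of_real \<sigma> * Bz + of_real \<tau> * Cz) \<le> \<sigma> * norm Bz + \<tau> * norm Cz"
    using norm_triangle_ineq[of "of_real \<sigma> * Bz" "of_real \<tau> * Cz"] assms by (simp add: norm_mult)
  also have "\<dots> \<le> \<sigma> * Br + \<tau> * Cr"
    using assms by (intro add_mono mult_left_mono) auto
  finally show ?thesis .
qed

lemma convex_comb_pos:
  fixes \<sigma> \<tau> u v :: real
  assumes "0 \<le> \<sigma>" "0 \<le> \<tau>" "\<sigma> + \<tau> = 1" "0 < u" "0 < v"
  shows "0 < \<sigma> * u + \<tau> * v"
proof (cases "\<sigma> = 0")
  case False
  with assms have "0 < \<sigma> * u" "0 \<le> \<tau> * v" by auto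
  then show ?thesis by linarith
qed (use assms in simp)

lemma linear_factor_bounds:
  fixes w Bz Cz :: complex
  assumes \<sigma>\<tau>: "0 \<le> \<sigma>" "0 \<le> \<tau>" "\<sigma> + \<tau> = 1" and PQ: "0 \<le> P" "0 \<le> Q"
    and bounds: "norm Bz \<le> Br" "norm Cz \<le> Cr"
    and u: "0 < norm w * P - Br" and v: "0 < norm w * Q - Cr"
  defines "L \<equiv> w * of_real (\<sigma> * P + \<tau> * Q) - (of_real \<sigma> * Bz + of_real \<tau> * Cz)"
  shows "0 < \<sigma> * (norm w * P - Br) + \<tau> * (norm w * Q - Cr)"
    and "\<sigma> * (norm w * P - Br) + \<tau> * (norm w * Q - Cr) \<le> norm L"
    and "norm (L - w * of_real (\<sigma> * P + \<tau> * Q)) < norm (w * of_real (\<sigma> * P + \<tau> * Q))"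
proof -
  show m: "0 < \<sigma> * (norm w * P - Br) + \<tau> * (norm w * Q - Cr)"
    by (rule convex_comb_pos[OF \<sigma>\<tau> u v])
  have "0 \<le> \<sigma> * P + \<tau> * Q" using \<sigma>\<tau> PQ by simp
  then have "norm (w * of_real (\<sigma> * P + \<tau> * Q)) = norm w * (\<sigma> * P + \<tau> * Q)"
    by (simp only: norm_mult norm_of_real abs_of_nonneg)
  then have wc: "norm (w * of_real (\<sigma> * P + \<tau> * Q))
      = \<sigma> * Br + \<tau> * Cr + (\<sigma> * (norm w * P - Br) + \<tau> * (norm w * Q - Cr))"
    by (simp add: algebra_simps)
  have \<beta>: "norm (of_real \<sigma> * Bz + of_real \<tau> * Cz) \<le> \<sigma> * Br + \<tau> * Cr"
    by (rule norm_convex_comb_le[OF \<sigma>\<tau>(1,2) bounds])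
  show "\<sigma> * (norm w * P - Br) + \<tau> * (norm w * Q - Cr) \<le> norm L"
    using norm_triangle_ineq2[of "w * of_real (\<sigma> * P + \<tau> * Q)" "of_real \<sigma> * Bz + of_real \<tau> * Cz"]
      wc \<beta> unfolding L_def by linarith
  have "norm (L - w * of_real (\<sigma> * P + \<tau> * Q)) = norm (of_real \<sigma> * Bz + of_real \<tau> * Cz)"
    unfolding L_def by (simp add: norm_minus_commute add.commute)
  then show "norm (L - w * of_real (\<sigma> * P + \<tau> * Q)) < norm (w * of_real (\<sigma> * P + \<tau> * Q))"
    using wc \<beta> m by linarith
qed

lemma mult_le_mult_convex_combs:
  fixes \<sigma> \<tau> u v :: real
  assumes "0 \<le> \<sigma>" "0 \<le> \<tau>" "\<sigma> + \<tau> = 1"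
  shows "u * v \<le> (\<sigma> * u + \<tau> * v) * (\<tau> * u + \<sigma> * v)"
proof -
  have \<tau>: "\<tau> = 1 - \<sigma>" using assms(3) by simp
  have "(\<sigma> * u + \<tau> * v) * (\<tau> * u + \<sigma> * v) - u * v = \<sigma> * \<tau> * (u - v)\<^sup>2"
    unfolding \<tau> by (simp add: algebra_simps power2_eq_square)
  moreover have "0 \<le> \<sigma> * \<tau> * (u - v)\<^sup>2" using assms by simp
  ultimately show ?thesis by linarith
qed

lemma boundary_estimates:
  fixes w Az Bz Cz Dz :: complex and \<eta> :: real
  assumes \<eta>: "\<bar>\<eta>\<bar> \<le> 1" and PQ: "0 \<le> P" "0 \<le> Q"
    and bounds: "norm Az \<le> Ar" "norm Bz \<le> Br" "norm Cz \<le> Cr" "norm Dz \<le> Dr"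
    and u: "0 < norm w * P - Br" and v: "0 < norm w * Q - Cr"
    and AD: "Ar * Dr < (norm w * P - Br) * (norm w * Q - Cr)"
  defines "s \<equiv> (1 + \<eta>) / 2" and "t \<equiv> (1 - \<eta>) / 2"
  defines "L1 \<equiv> w * of_real (t * P + s * Q) - (of_real t * Bz + of_real s * Cz)"
    and "L2 \<equiv> w * of_real (s * P + t * Q) - (of_real s * Bz + of_real t * Cz)"
  shows "norm (of_real (\<eta>\<^sup>2) * Az * Dz) < norm (L1 * L2)"
    and "norm (L1 * L2 - w * of_real (t * P + s * Q) * L2) < norm (w * of_real (t * P + s * Q) * L2)"
    and "norm (w * of_real (t * P + s * Q) * L2 - w * of_real (t * P + s * Q) * (w * of_real (s * P + t * Q)))
           < norm (w * of_real (t * P + s * Q) * (w * of_real (s * P + t * Q)))"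
proof -
  have st: "0 \<le> s" "0 \<le> t" "s + t = 1" "t + s = 1" using \<eta> by (auto simp: s_def t_def field_simps)
  note L1 = linear_factor_bounds[OF st(2,1,4) PQ bounds(2,3) u v, folded L1_def]
  note L2 = linear_factor_bounds[OF st(1,2,3) PQ bounds(2,3) u v, folded L2_def]
  let ?u = "norm w * P - Br" and ?v = "norm w * Q - Cr"
  have "norm (of_real (\<eta>\<^sup>2) * Az * Dz) = \<eta>\<^sup>2 * (norm Az * norm Dz)"
    by (simp only: norm_mult norm_of_real abs_power2 mult.assoc)
  also have "\<dots> \<le> norm Az * norm Dz"
    using \<eta> by (simp add: abs_square_le_1 mult_left_le_one_le)
  also have "\<dots> \<le> Ar * Dr"
    using bounds order.trans[OF norm_ge_zero bounds(1)] by (intro mult_mono) auto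
  also have "\<dots> < ?u * ?v" by (fact AD)
  also have "\<dots> \<le> (t * ?u + s * ?v) * (s * ?u + t * ?v)"
    by (rule mult_le_mult_convex_combs[OF st(2,1,4)])
  also have "\<dots> \<le> norm L1 * norm L2"
    using L1(1,2) L2(1,2) by (intro mult_mono) auto
  finally show "norm (of_real (\<eta>\<^sup>2) * Az * Dz) < norm (L1 * L2)" by (simp add: norm_mult)
  have "0 < norm L2" using L2(1,2) by linarith
  then show "norm (L1 * L2 - w * of_real (t * P + s * Q) * L2) < norm (w * of_real (t * P + s * Q) * L2)"
    using L1(3) by (simp add: norm_mult flip: left_diff_distrib)
  have "0 < norm (w * of_real (t * P + s * Q))" using le_less_trans[OF norm_ge_zero L1(3)] .
  then show "norm (w * of_real (t * P + s * Q) * L2 - w * of_real (t * P + s * Q) * (w * of_real (s * P + t * Q)))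
           < norm (w * of_real (t * P + s * Q) * (w * of_real (s * P + t * Q)))"
    using L2(3) by (simp only: norm_mult right_diff_distrib[symmetric] mult_strict_left_mono)
qed

lemma quadratic_factorization:
  fixes E w a b c d Az Bz Cz Dz :: "'a::field_char_0"
  defines "s \<equiv> (1 + E) / 2" and "t \<equiv> (1 - E) / 2"
  shows "E\<^sup>2 * ((w * (a + b - c - d) - Bz + Cz)\<^sup>2 + 4 * Az * Dz) - (Bz + Cz - w * (a + b + c + d))\<^sup>2
    = -4 * ((w * (t * (a + b) + s * (c + d)) - (t * Bz + s * Cz))
            * (w * (s * (a + b) + t * (c + d)) - (s * Bz + t * Cz)) - E\<^sup>2 * Az * Dz)"
  unfolding s_def t_def by (simp add: field_simps power2_eq_square)

lemma sum_zorder_zeros_unit_disc: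
  fixes al be ga de :: "nat \<Rightarrow> real" and K :: nat and \<eta> :: real and G :: "complex \<Rightarrow> complex"
  assumes m: "moment_summable al" "moment_summable be" "moment_summable ga" "moment_summable de"
    and pos: "0 < suminf al" "0 < suminf de"
    and E: "0 < suminf de * ((\<Sum>n. real n * al n) - real K * suminf al
                               + (\<Sum>n. real n * be n) - real K * suminf be)
             + suminf al * ((\<Sum>n. real n * ga n) - real K * suminf ga
                               + (\<Sum>n. real n * de n) - real K * suminf de)"
    and \<eta>: "\<bar>\<eta>\<bar> \<le> 1"
    and G: "\<And>z. G z = of_real (\<eta>\<^sup>2) *
        ((z ^ K * of_real (suminf al + suminf be - suminf ga - suminf de) - cpowser be z + cpowser ga z)\<^sup>2
          + 4 * cpowser al z * cpowser de z)
        - (cpowser be z + cpowser ga z - z ^ K * of_real (suminf al + suminf be + suminf ga + suminf de))\<^sup>2"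
  shows "finite {z. norm z < 1 \<and> G z = 0} \<and> (\<Sum>z\<in>{z. norm z < 1 \<and> G z = 0}. nat (zorder G z)) = 2 * K"
proof -
  define P where "P = suminf al + suminf be"
  define Q where "Q = suminf ga + suminf de"
  define s where "s = (1 + \<eta>) / 2"
  define t where "t = (1 - \<eta>) / 2"
  define c1 where "c1 = complex_of_real (t * P + s * Q)"
  define c2 where "c2 = complex_of_real (s * P + t * Q)"
  define L1 where "L1 z = z ^ K * c1 - (of_real t * cpowser be z + of_real s * cpowser ga z)" for z
  define L2 where "L2 z = z ^ K * c2 - (of_real s * cpowser be z + of_real t * cpowser ga z)" for z
  define H where "H z = L1 z * L2 z - of_real (\<eta>\<^sup>2) * cpowser al z * cpowser de z" for z
  have G_eq: "G = (\<lambda>z. -4 * H z)"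
    by (auto simp: fun_eq_iff G H_def L1_def L2_def c1_def c2_def s_def t_def P_def Q_def
        quadratic_factorization[where E = "of_real \<eta>"])
  obtain r0 where "r0 < 1" and r0: "\<And>r. r0 < r \<Longrightarrow> r < 1 \<Longrightarrow> 0 < r \<and>
      0 < r ^ K * P - rpowser be r \<and> 0 < r ^ K * Q - rpowser ga r \<and>
      rpowser al r * rpowser de r < (r ^ K * P - rpowser be r) * (r ^ K * Q - rpowser ga r)"
    using eventually_boundary_inequalities[OF m pos E]
    unfolding eventually_at_left_field P_def Q_def by blast
  define \<rho> where "\<rho> = (max r0 0 + 1) / 2"
  have \<rho>: "0 < \<rho>" "\<rho> < 1" "r0 < \<rho>" using \<open>r0 < 1\<close> by (auto simp: \<rho>_def)
  have est: "norm (H z - L1 z * L2 z) < norm (L1 z * L2 z)"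
      "norm (L1 z * L2 z - z ^ K * c1 * L2 z) < norm (z ^ K * c1 * L2 z)"
      "norm (z ^ K * c1 * L2 z - z ^ K * c1 * (z ^ K * c2)) < norm (z ^ K * c1 * (z ^ K * c2))"
    if z: "\<rho> \<le> norm z" "norm z < 1" for z
  proof -
    have bound: "norm (cpowser co z) \<le> rpowser co (norm z)" if "moment_summable co" for co
      using norm_cpowser_le[OF moment_summableD(1,2)[OF that]] z by simp
    have PQ: "0 \<le> P" "0 \<le> Q"
      using moment_summableD(4) m by (auto simp: P_def Q_def)
    from r0[of "norm z"] z \<rho> have "0 < norm (z ^ K) * P - rpowser be (norm z)"
      "0 < norm (z ^ K) * Q - rpowser ga (norm z)"
      "rpowser al (norm z) * rpowser de (norm z)
         < (norm (z ^ K) * P - rpowser be (norm z)) * (norm (z ^ K) * Q - rpowser ga (norm z))"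
      by (auto simp: norm_power)
    from boundary_estimates[OF \<eta> PQ bound[OF m(1)] bound[OF m(2)] bound[OF m(3)] bound[OF m(4)] this,
        folded s_def t_def, folded c1_def c2_def, folded L1_def L2_def]
    show "norm (H z - L1 z * L2 z) < norm (L1 z * L2 z)"
      "norm (L1 z * L2 z - z ^ K * c1 * L2 z) < norm (z ^ K * c1 * L2 z)"
      "norm (z ^ K * c1 * L2 z - z ^ K * c1 * (z ^ K * c2)) < norm (z ^ K * c1 * (z ^ K * c2))"
      by (simp_all add: H_def)
  qed
  have "cpowser co holomorphic_on ball 0 1" if "moment_summable co" for co
    by (rule holomorphic_on_cpowser[OF moment_summableD(2)[OF that]])
  then have hol: "L1 holomorphic_on ball 0 1" "L2 holomorphic_on ball 0 1" "H holomorphic_on ball 0 1"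
    unfolding L1_def[abs_def] L2_def[abs_def] H_def[abs_def] by (auto intro!: holomorphic_intros m)
  have count: "zero_count G (ball 0 \<rho>) = int (2 * K)"
    unfolding G_eq zero_count_cmult[OF neg_numeral_neq_zero]
    by (rule zero_count_Rouche_chain[OF hol \<rho>(1,2)]) (use est \<rho> in auto)
  have "G z \<noteq> 0" if "\<rho> \<le> norm z" "norm z < 1" for z
    using est(1)[OF that] by (auto simp: G_eq)
  moreover have "G holomorphic_on ball 0 1"
    unfolding G_eq by (intro holomorphic_intros hol)
  ultimately show ?thesis
    using zeros_in_unit_disc_eq_zero_count[OF _ \<rho>(1,2)] count by simp
qed

lemma gen_fun_eq_cpowser: "gen_fun K r = cpowser (\<lambda>n. r (int K - int n))"
  by (simp add: gen_fun_def cpowser_def fun_eq_iff)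

text \<open>Of the process itself only the nonnegativity of the rates enters.\<close>
theorem lemma5:
  fixes c K :: nat
    and a b cr d :: "int \<Rightarrow> real"
    and V :: "'v set" and qVV :: "'v \<Rightarrow> 'v \<Rightarrow> real"
    and qVW :: "'v \<Rightarrow> wstate \<Rightarrow> real" and qWV :: "wstate \<Rightarrow> 'v \<Rightarrow> real"
    and x :: "nat \<Rightarrow> real"
  assumes c_pos: "c \<ge> 1" and K_pos: "K \<ge> 1"
    and proc: "sym_process c K a b cr d V qVV qVW qWV"
    and A_i: "summable (\<lambda>n. a (int K - int n))" "summable (\<lambda>n. b (int K - int n))"
             "summable (\<lambda>n. cr (int K - int n))" "summable (\<lambda>n. d (int K - int n))"
    and A_ii: "gen_at1 K a > 0" "gen_at1 K d > 0"
    and A_iii: "summable (\<lambda>n. real n * a (int K - int n))"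
               "summable (\<lambda>n. real n * b (int K - int n))"
               "summable (\<lambda>n. real n * cr (int K - int n))"
               "summable (\<lambda>n. real n * d (int K - int n))"
    and A_iv: "a (int K) = 0 \<or> d (int K) = 0"
    and A_v: "b (int K) = cr (int K)" "b (int K) \<noteq> 0"
    and E_s: "0 < gen_at1 K d * (gen_deriv_at1 K a - real K * gen_at1 K a
                                   + gen_deriv_at1 K b - real K * gen_at1 K b)
                 + gen_at1 K a * (gen_deriv_at1 K cr - real K * gen_at1 K cr
                                   + gen_deriv_at1 K d - real K * gen_at1 K d)"
    and x_pm: "\<forall>i\<in>{1..c}. x i = 1 \<or> x i = -1"
  shows
    "let \<eta> = - (1 / real c) * (\<Sum>i=1..c. x i);
         A = gen_fun K a; B = gen_fun K b; C = gen_fun K cr; D = gen_fun K d;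
         S = gen_at1 K a + gen_at1 K b + gen_at1 K cr + gen_at1 K d;
         F = (\<lambda>z. z ^ K * complex_of_real (gen_at1 K a + gen_at1 K b - gen_at1 K cr - gen_at1 K d)
                  - B z + C z);
         G = (\<lambda>z. complex_of_real (\<eta>\<^sup>2) * ((F z)\<^sup>2 + 4 * A z * D z)
                  - (B z + C z - z ^ K * complex_of_real S)\<^sup>2)
     in finite {z. norm z < 1 \<and> G z = 0} \<and>
        (\<Sum>z\<in>{z. norm z < 1 \<and> G z = 0}. nat (zorder G z)) = 2 * K"
proof -
  have "\<forall>k \<le> int K. 0 \<le> a k \<and> 0 \<le> b k \<and> 0 \<le> cr k \<and> 0 \<le> d k"
    using proc by (simp add: sym_process_def)
  then have m: "moment_summable (\<lambda>n. a (int K - int n))" "moment_summable (\<lambda>n. b (int K - int n))"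
      "moment_summable (\<lambda>n. cr (int K - int n))" "moment_summable (\<lambda>n. d (int K - int n))"
    using A_i A_iii by (auto simp: moment_summable_def)
  have "\<bar>\<Sum>i=1..c. x i\<bar> \<le> (\<Sum>i=1..c. \<bar>x i\<bar>)" by (rule sum_abs)
  also have "\<dots> \<le> real c"
    using sum_bounded_above[of "{1..c}" "\<lambda>i. \<bar>x i\<bar>" 1] x_pm by force
  finally have \<eta>: "\<bar>- (1 / real c) * (\<Sum>i=1..c. x i)\<bar> \<le> 1"
    using c_pos by (simp add: abs_mult field_simps)
  show ?thesis
    unfolding Let_def gen_fun_eq_cpowser gen_at1_def
    by (rule sum_zorder_zeros_unit_disc[OF m _ _ _ \<eta>])
      (use A_ii E_s in \<open>simp_all add: gen_at1_def gen_deriv_at1_def\<close>)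
qed

end
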